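(* If $X_1,\dots,X_m$ ($m\ge2$) are isentropic, then the source $X_{\mathcal M}$ is Type $\mathcal S$; that is, the singleton partition $\mathcal S$ attains $\min_{\mathcal P}\Delta(\mathcal P)$.
   Context: Let $\mathcal M=\{1,\dots,m\}$, and let $X_{\mathcal M}$ be jointly distributed finite-valued random variables, with $X_A=(X_i:i\in A)$. $X_1,\dots,X_m$ are isentropic if $H(X_A)=H(X_B)$ for all nonempty $A,B\subseteq\mathcal M$ with $|A|=|B|$. For a partition $\mathcal P$ of $\mathcal M$ with $|\mathcal P|\ge2$, $\Delta(\mathcal P)=\frac1{|\mathcal P|-1}[\sum_{A\in\mathcal P}H(X_A)-H(X_{\mathcal M})]$. $\mathcal S=\{\{1\},\dots,\{m\}\}$, and the source is Type $\mathcal S$ if $\mathcal S$ minimizes $\Delta$ over all partitions with at least two cells. *)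

theory Defs
  imports "HOL-Probability.Probability_Mass_Function" "HOL-Library.Disjoint_Sets"
begin

text \<open>The joint distribution of X_1, X_2, ... is a pmf p on outcome vectors
  f :: nat => 'a, with X_i = f i.  X_A is the restriction of the outcome to A.\<close>

definition pmf_entropy :: "'b pmf \<Rightarrow> real" where
  "pmf_entropy q = - (\<Sum>x\<in>set_pmf q. pmf q x * log 2 (pmf q x))"

definition joint_entropy :: "(nat \<Rightarrow> 'a) pmf \<Rightarrow> nat set \<Rightarrow> real" where
  "joint_entropy p A = pmf_entropy (map_pmf (\<lambda>f. restrict f A) p)"

definition isentropic :: "(nat \<Rightarrow> 'a) pmf \<Rightarrow> nat set \<Rightarrow> bool" where
  "isentropic p M \<longleftrightarrow> (\<forall>A B. A \<subseteq> M \<longrightarrow> B \<subseteq> M \<longrightarrow> A \<noteq> {} \<longrightarrow> B \<noteq> {} \<longrightarrow>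
      card A = card B \<longrightarrow> joint_entropy p A = joint_entropy p B)"

definition Delta :: "(nat \<Rightarrow> 'a) pmf \<Rightarrow> nat set \<Rightarrow> nat set set \<Rightarrow> real" where
  "Delta p M P = (1 / (real (card P) - 1)) *
      ((\<Sum>A\<in>P. joint_entropy p A) - joint_entropy p M)"

definition singleton_partition :: "nat set \<Rightarrow> nat set set" where
  "singleton_partition M = (\<lambda>i. {i}) ` M"

definition type_S :: "(nat \<Rightarrow> 'a) pmf \<Rightarrow> nat set \<Rightarrow> bool" where
  "type_S p M \<longleftrightarrow> (\<forall>P. partition_on M P \<and> card P \<ge> 2 \<longrightarrow>
      Delta p M (singleton_partition M) \<le> Delta p M P)"

end

theory Submission imports Defs begin

text \<open>Entropy is submodular: for a finitely supported pair distribution whose two components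
  determine a common coarsening, H(X,Y) + H(C) \<le> H(X) + H(Y), by the Gibbs-type estimate
  \<open>ln t \<le> t - 1\<close>. For isentropic variables, submodularity applied to two overlapping intervals
  shows that \<open>h k = H(X_{1..k})\<close> is concave in \<open>k\<close>, so \<open>h\<close> lies above its chord from \<open>1\<close> to \<open>m\<close>.
  Summing the chord bound over the cells of a partition with \<open>k\<close> cells gives
  \<open>(m - 1) \<Sum>h(|A|) \<ge> (k - 1) m h 1 + (m - k) h m\<close>, which rearranges to
  \<open>\<Delta>(\<S>) \<le> \<Delta>(\<P>)\<close>.\<close>

lemma pmf_map_pmf_eq_sum_fiber:
  assumes "finite (set_pmf Q)"
  shows "pmf (map_pmf g Q) y = (\<Sum>x\<in>{x\<in>set_pmf Q. g x = y}. pmf Q x)"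
proof -
  have "pmf (map_pmf g Q) y = measure Q (g -` {y} \<inter> set_pmf Q)"
    by (simp add: pmf_map measure_Int_set_pmf)
  also have "g -` {y} \<inter> set_pmf Q = {x\<in>set_pmf Q. g x = y}" by auto
  also have "measure Q \<dots> = (\<Sum>x\<in>{x\<in>set_pmf Q. g x = y}. pmf Q x)"
    using assms by (intro measure_measure_pmf_finite) auto
  finally show ?thesis .
qed

lemma pmf_entropy_map_pmf_eq_sum:
  assumes "finite (set_pmf Q)"
  shows "pmf_entropy (map_pmf g Q) = - (\<Sum>x\<in>set_pmf Q. pmf Q x * log 2 (pmf (map_pmf g Q) (g x)))"
proof -
  let ?P = "map_pmf g Q"
  have "(\<Sum>y\<in>set_pmf ?P. pmf ?P y * log 2 (pmf ?P y))
      = (\<Sum>y\<in>g ` set_pmf Q. (\<Sum>x\<in>{x\<in>set_pmf Q. g x = y}. pmf Q x) * log 2 (pmf ?P y))"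
    by (simp only: set_map_pmf pmf_map_pmf_eq_sum_fiber[OF assms])
  also have "\<dots> = (\<Sum>y\<in>g ` set_pmf Q. (\<Sum>x\<in>{x\<in>set_pmf Q. g x = y}. pmf Q x * log 2 (pmf ?P (g x))))"
    by (intro sum.cong refl) (auto simp: sum_distrib_right)
  also have "\<dots> = (\<Sum>x\<in>set_pmf Q. pmf Q x * log 2 (pmf ?P (g x)))"
    using assms by (intro sum.group) auto
  finally show ?thesis unfolding pmf_entropy_def by simp
qed

lemma pmf_entropy_map_pmf_inj:
  assumes "inj_on g (set_pmf Q)"
  shows "pmf_entropy (map_pmf g Q) = pmf_entropy Q"
  unfolding pmf_entropy_def using assms by (simp add: sum.reindex pmf_map_inj)

lemma mult_log_div_le:
  fixes w r :: real
  assumes "0 < w" "0 < r"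
  shows "w * log 2 (r / w) \<le> (r - w) / ln 2"
proof -
  have "log 2 (r / w) \<le> (r / w - 1) / ln 2"
    using ln_le_minus_one[of "r / w"] assms by (simp add: log_def divide_right_mono)
  then have "w * log 2 (r / w) \<le> w * ((r / w - 1) / ln 2)"
    using assms by (intro mult_left_mono) auto
  also have "\<dots> = (r - w) / ln 2"
    using assms by (simp add: field_simps)
  finally show ?thesis .
qed

text \<open>Summing first over the second component, the fibre of \<open>cB\<close> over \<open>cA a\<close> has exactly the
  mass of the common coarsening at \<open>cA a\<close>, which cancels the denominator.\<close>

lemma sum_marginals_div_common_marginal_le_1:
  fixes J :: "('x \<times> 'y) pmf"
  assumes fin: "finite (set_pmf J)" and common: "\<forall>z\<in>set_pmf J. cA (fst z) = cB (snd z)"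
  shows "(\<Sum>z\<in>set_pmf J. pmf (map_pmf fst J) (fst z) * pmf (map_pmf snd J) (snd z)
            / pmf (map_pmf (cA \<circ> fst) J) (cA (fst z))) \<le> 1"
proof -
  define pA where "pA = pmf (map_pmf fst J)"
  define pB where "pB = pmf (map_pmf snd J)"
  define pC where "pC = pmf (map_pmf (cA \<circ> fst) J)"
  define SA where "SA = set_pmf (map_pmf fst J)"
  define SB where "SB = set_pmf (map_pmf snd J)"
  have finA: "finite SA" and finB: "finite SB" using fin by (auto simp: SA_def SB_def)
  have "map_pmf (cA \<circ> fst) J = map_pmf cB (map_pmf snd J)"
    unfolding map_pmf_comp using common by (intro map_pmf_cong) auto
  then have fibre: "(\<Sum>b\<in>{b\<in>SB. cB b = c}. pB b) = pC c" for c
    unfolding pC_def pB_def SB_def using fin by (simp add: pmf_map_pmf_eq_sum_fiber)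
  define T where "T = Sigma SA (\<lambda>a. {b\<in>SB. cB b = cA a})"
  have "set_pmf J \<subseteq> T" unfolding T_def SA_def SB_def using common by force
  then have "(\<Sum>z\<in>set_pmf J. pA (fst z) * pB (snd z) / pC (cA (fst z)))
        \<le> (\<Sum>z\<in>T. pA (fst z) * pB (snd z) / pC (cA (fst z)))"
    using finA finB by (intro sum_mono2) (auto simp: T_def pA_def pB_def pC_def)
  also have "\<dots> = (\<Sum>a\<in>SA. pA a / pC (cA a) * (\<Sum>b\<in>{b\<in>SB. cB b = cA a}. pB b))"
    unfolding T_def using finA finB by (simp add: sum.Sigma split_beta sum_distrib_left)
  also have "\<dots> = (\<Sum>a\<in>SA. pA a)"
  proof (intro sum.cong refl)
    fix a assume "a \<in> SA"
    then obtain z where "z \<in> set_pmf J" "a = fst z" unfolding SA_def by auto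
    then have "pC (cA a) > 0" unfolding pC_def by (simp add: pmf_positive)
    then show "pA a / pC (cA a) * (\<Sum>b\<in>{b\<in>SB. cB b = cA a}. pB b) = pA a"
      by (simp add: fibre)
  qed
  also have "\<dots> = 1" unfolding pA_def SA_def using fin by (intro sum_pmf_eq_1) auto
  finally show ?thesis by (simp add: pA_def pB_def pC_def)
qed

lemma pmf_entropy_pair_submodular:
  fixes J :: "('x \<times> 'y) pmf"
  assumes fin: "finite (set_pmf J)" and common: "\<forall>z\<in>set_pmf J. cA (fst z) = cB (snd z)"
  shows "pmf_entropy J + pmf_entropy (map_pmf (cA \<circ> fst) J)
         \<le> pmf_entropy (map_pmf fst J) + pmf_entropy (map_pmf snd J)"
proof -
  define pA where "pA z = pmf (map_pmf fst J) (fst z)" for z :: "'x \<times> 'y"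
  define pB where "pB z = pmf (map_pmf snd J) (snd z)" for z :: "'x \<times> 'y"
  define pC where "pC z = pmf (map_pmf (cA \<circ> fst) J) (cA (fst z))" for z :: "'x \<times> 'y"
  define r where "r z = pA z * pB z / pC z" for z :: "'x \<times> 'y"
  have pos: "0 < pA z" "0 < pB z" "0 < pC z" "0 < pmf J z" if "z \<in> set_pmf J" for z
    using that by (simp_all add: pA_def pB_def pC_def pmf_positive)
  have "pmf_entropy J + pmf_entropy (map_pmf (cA \<circ> fst) J)
          - pmf_entropy (map_pmf fst J) - pmf_entropy (map_pmf snd J)
      = (\<Sum>z\<in>set_pmf J. pmf J z * (log 2 (pA z) + log 2 (pB z) - log 2 (pmf J z) - log 2 (pC z)))"
    unfolding pmf_entropy_map_pmf_eq_sum[OF fin] pmf_entropy_map_pmf_eq_sum[OF fin, of id, simplified]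
    by (simp add: pA_def pB_def pC_def ring_distribs sum.distrib sum_subtractf)
  also have "\<dots> = (\<Sum>z\<in>set_pmf J. pmf J z * log 2 (r z / pmf J z))"
    by (intro sum.cong refl) (use pos in \<open>simp add: r_def log_mult log_divide less_imp_neq[symmetric]\<close>)
  also have "\<dots> \<le> (\<Sum>z\<in>set_pmf J. (r z - pmf J z) / ln 2)"
    by (intro sum_mono mult_log_div_le) (simp_all add: r_def pos)
  also have "\<dots> = ((\<Sum>z\<in>set_pmf J. r z) - (\<Sum>z\<in>set_pmf J. pmf J z)) / ln 2"
    by (simp only: sum_divide_distrib[symmetric] sum_subtractf)
  also have "\<dots> \<le> 0"
    using sum_marginals_div_common_marginal_le_1[OF fin common] fin
    by (simp add: r_def pA_def pB_def pC_def sum_pmf_eq_1 divide_nonpos_pos)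
  finally show ?thesis by simp
qed

lemma restrict_Un_eqI:
  assumes "restrict u A = restrict v A" "restrict u B = restrict v B"
  shows "restrict u (A \<union> B) = restrict v (A \<union> B)"
  using assms unfolding fun_eq_iff restrict_def by (metis Un_iff)

lemma finite_set_pmf_restrict:
  fixes p :: "('i \<Rightarrow> 'a) pmf"
  assumes "finite A" "\<forall>i\<in>A. finite ((\<lambda>f. f i) ` set_pmf p)"
  shows "finite (set_pmf (map_pmf (\<lambda>f. restrict f A) p))"
proof (rule finite_subset)
  show "set_pmf (map_pmf (\<lambda>f. restrict f A) p) \<subseteq> PiE A (\<lambda>i. (\<lambda>f. f i) ` set_pmf p)"
    by auto
  show "finite (PiE A (\<lambda>i. (\<lambda>f. f i) ` set_pmf p))"
    using assms by (intro finite_PiE) auto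
qed

lemma joint_entropy_submodular:
  fixes p :: "(nat \<Rightarrow> 'a) pmf"
  assumes fin: "finite (set_pmf (map_pmf (\<lambda>f. restrict f (A \<union> B)) p))"
  shows "joint_entropy p (A \<union> B) + joint_entropy p (A \<inter> B) \<le> joint_entropy p A + joint_entropy p B"
proof -
  define R where "R = map_pmf (\<lambda>f. restrict f (A \<union> B)) p"
  define \<phi> where "\<phi> u = (restrict u A, restrict u B)" for u :: "nat \<Rightarrow> 'a"
  define J where "J = map_pmf \<phi> R"
  have J_eq: "J = map_pmf (\<lambda>f. (restrict f A, restrict f B)) p"
    unfolding J_def R_def \<phi>_def map_pmf_comp by (intro map_pmf_cong) (auto simp: Int_absorb1)
  have "inj_on \<phi> (set_pmf R)"
    by (rule inj_onI) (auto simp: R_def \<phi>_def intro: restrict_Un_eqI)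
  then have "pmf_entropy J = joint_entropy p (A \<union> B)"
    unfolding J_def R_def joint_entropy_def by (rule pmf_entropy_map_pmf_inj)
  moreover have "finite (set_pmf J)" using fin by (simp add: J_def R_def)
  moreover have "\<forall>z\<in>set_pmf J. restrict (fst z) (A \<inter> B) = restrict (snd z) (A \<inter> B)"
    unfolding J_eq by (auto simp: Int_commute)
  ultimately show ?thesis
    using pmf_entropy_pair_submodular[of J "\<lambda>u. restrict u (A \<inter> B)" "\<lambda>u. restrict u (A \<inter> B)"]
    unfolding J_eq joint_entropy_def map_pmf_comp by (simp add: o_def)
qed

lemma concave_seq_above_chord:
  fixes h :: "nat \<Rightarrow> real"
  assumes concave: "\<And>k. 1 \<le> k \<Longrightarrow> k + 2 \<le> m \<Longrightarrow> h (k + 2) - h (k + 1) \<le> h (k + 1) - h k"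
    and a: "1 \<le> a" "a \<le> m"
  shows "(real m - real a) * h 1 + (real a - 1) * h m \<le> (real m - 1) * h a"
proof (cases "a = 1")
  case True
  then show ?thesis by (simp add: algebra_simps)
next
  case False
  define d where "d i = h (Suc i) - h i" for i
  have d_antimono: "d j \<le> d i" if "1 \<le> i" "i \<le> j" "j < m" for i j
    using that(2,3)
  proof (induction j rule: dec_induct)
    case (step n)
    then have "d (Suc n) \<le> d n" using concave[of n] that(1) by (simp add: d_def)
    with step show ?case by simp
  qed simp
  \<comment> \<open>the increment \<open>c\<close> bounds the increments before \<open>a\<close> from below and those after from above\<close>
  define c where "c = d (a - 1)"
  have "real (card {1..<a}) * c \<le> (\<Sum>i = 1..<a. d i)"
    by (rule sum_bounded_below) (use d_antimono a in \<open>auto simp: c_def\<close>)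
  also have "\<dots> = h a - h 1"
    unfolding d_def using a(1) by (rule sum_Suc_diff')
  finally have lower: "(real a - 1) * c \<le> h a - h 1" using a by (simp add: of_nat_diff)
  have "h m - h a = (\<Sum>i = a..<m. d i)"
    unfolding d_def using a(2) by (rule sum_Suc_diff'[symmetric])
  also have "\<dots> \<le> real (card {a..<m}) * c"
    by (rule sum_bounded_above) (use d_antimono a False in \<open>auto simp: c_def\<close>)
  finally have upper: "h m - h a \<le> (real m - real a) * c" using a by (simp add: of_nat_diff)
  have "(real a - 1) * (h m - h a) \<le> (real a - 1) * ((real m - real a) * c)"
    using upper a by (intro mult_left_mono) auto
  moreover have "(real m - real a) * ((real a - 1) * c) \<le> (real m - real a) * (h a - h 1)"
    using lower a by (intro mult_left_mono) auto
  ultimately show ?thesis by (simp add: algebra_simps)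
qed

lemma sum_card_partition_on:
  assumes "finite M" "partition_on M P"
  shows "(\<Sum>A\<in>P. card A) = card M"
proof -
  have "finite A" if "A \<in> P" for A
    using assms that by (metis Sup_upper finite_subset partition_onD1)
  then show ?thesis
    using card_Union_disjoint[of P] partition_onD1[OF assms(2)] partition_onD2[OF assms(2)] by simp
qed

lemma sum_partition_chord_bound:
  fixes h :: "nat \<Rightarrow> real"
  assumes M: "finite M" and P: "partition_on M P"
    and chord: "\<And>a. 1 \<le> a \<Longrightarrow> a \<le> card M \<Longrightarrow>
      (real (card M) - real a) * h 1 + (real a - 1) * h (card M) \<le> (real (card M) - 1) * h a"
  shows "(real (card P) - 1) * real (card M) * h 1 + (real (card M) - real (card P)) * h (card M)
    \<le> (real (card M) - 1) * (\<Sum>A\<in>P. h (card A))"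
proof -
  let ?n = "card M"
  have card_bounds: "1 \<le> card A" "card A \<le> ?n" if "A \<in> P" for A
  proof -
    have "A \<subseteq> M" "A \<noteq> {}" using P that by (auto simp: partition_on_def)
    then show "1 \<le> card A" "card A \<le> ?n"
      using M by (auto simp: Suc_le_eq card_gt_0_iff intro: card_mono finite_subset)
  qed
  have sum_card: "(\<Sum>A\<in>P. real (card A)) = real ?n"
    using sum_card_partition_on[OF M P] by (metis of_nat_sum)
  have "(real (card P) - 1) * real ?n * h 1 + (real ?n - real (card P)) * h ?n
      = (\<Sum>A\<in>P. (real ?n - real (card A)) * h 1 + (real (card A) - 1) * h ?n)"
    by (simp add: sum.distrib sum_distrib_right[symmetric] sum_subtractf sum_card algebra_simps)
  also have "\<dots> \<le> (\<Sum>A\<in>P. (real ?n - 1) * h (card A))"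
    by (intro sum_mono chord card_bounds)
  finally show ?thesis by (simp add: sum_distrib_left)
qed

lemma type_S_if_entropy_profile_above_chord:
  fixes p :: "(nat \<Rightarrow> 'a) pmf" and h :: "nat \<Rightarrow> real"
  assumes M: "finite M" "2 \<le> card M"
    and profile: "\<And>A. A \<subseteq> M \<Longrightarrow> A \<noteq> {} \<Longrightarrow> joint_entropy p A = h (card A)"
    and chord: "\<And>a. 1 \<le> a \<Longrightarrow> a \<le> card M \<Longrightarrow>
      (real (card M) - real a) * h 1 + (real a - 1) * h (card M) \<le> (real (card M) - 1) * h a"
  shows "type_S p M"
  unfolding type_S_def
proof (intro allI impI, elim conjE)
  fix P assume P: "partition_on M P" and k: "2 \<le> card P"
  let ?n = "card M" and ?k = "card P"
  have "M \<noteq> {}" using M by auto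
  then have entropy_M: "joint_entropy p M = h ?n" by (rule profile[OF order_refl])
  have "(\<Sum>A\<in>singleton_partition M. joint_entropy p A) = real ?n * h 1"
    by (simp add: singleton_partition_def sum.reindex profile)
  then have Delta_S: "Delta p M (singleton_partition M) = (real ?n * h 1 - h ?n) / (real ?n - 1)"
    by (simp add: Delta_def singleton_partition_def card_image entropy_M)
  have "(\<Sum>A\<in>P. joint_entropy p A) = (\<Sum>A\<in>P. h (card A))"
    by (intro sum.cong refl profile) (use P in \<open>auto simp: partition_on_def\<close>)
  then have Delta_P: "Delta p M P = ((\<Sum>A\<in>P. h (card A)) - h ?n) / (real ?k - 1)"
    by (simp add: Delta_def entropy_M)
  show "Delta p M (singleton_partition M) \<le> Delta p M P"
    unfolding Delta_S Delta_P
    using sum_partition_chord_bound[OF M(1) P chord] M k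
    by (simp add: divide_simps algebra_simps)
qed

lemma joint_entropy_isentropic_eq_prefix:
  assumes "isentropic p {1..m}" "A \<subseteq> {1..m}" "A \<noteq> {}"
  shows "joint_entropy p A = joint_entropy p {1..card A}"
proof -
  have "finite A" using assms(2) finite_subset by blast
  then have "1 \<le> card A" "card A \<le> m"
    using assms(2,3) card_mono[OF _ assms(2)] by (auto simp: Suc_le_eq card_gt_0_iff)
  then have "{1..card A} \<subseteq> {1..m}" "{1..card A} \<noteq> {}" "card {1..card A} = card A"
    by auto
  then show ?thesis
    using assms(1)[unfolded isentropic_def, rule_format, of A "{1..card A}"] assms(2,3) by simp
qed

lemma isentropic_prefix_entropy_concave:
  fixes p :: "(nat \<Rightarrow> 'a) pmf"
  assumes iso: "isentropic p {1..m}" and fin: "\<forall>i\<in>{1..m}. finite ((\<lambda>f. f i) ` set_pmf p)"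
    and k: "1 \<le> k" "k + 2 \<le> m"
  shows "joint_entropy p {1..k + 2} - joint_entropy p {1..k + 1}
    \<le> joint_entropy p {1..k + 1} - joint_entropy p {1..k}"
proof -
  define A where "A = {1..k + 1}"
  define B where "B = insert (k + 2) {1..k}"
  have "joint_entropy p (A \<union> B) + joint_entropy p (A \<inter> B) \<le> joint_entropy p A + joint_entropy p B"
    using fin k by (intro joint_entropy_submodular finite_set_pmf_restrict) (auto simp: A_def B_def)
  moreover have "A \<union> B = {1..k + 2}" "A \<inter> B = {1..k}"
    by (auto simp: A_def B_def)
  moreover have "joint_entropy p B = joint_entropy p {1..k + 1}"
    using joint_entropy_isentropic_eq_prefix[OF iso, of B] k by (simp add: B_def subset_iff)
  ultimately show ?thesis by (simp add: A_def)
qed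

theorem corollary1:
  fixes p :: "(nat \<Rightarrow> 'a) pmf" and m :: nat
  assumes "m \<ge> 2"
    and "\<forall>i\<in>{1..m}. finite ((\<lambda>f. f i) ` set_pmf p)"
    and "isentropic p {1..m}"
  shows "type_S p {1..m}"
proof -
  define h where "h k = joint_entropy p {1..k}" for k
  show ?thesis
  proof (rule type_S_if_entropy_profile_above_chord)
    show "finite {1..m}" "2 \<le> card {1..m}" using assms(1) by simp_all
    show "joint_entropy p A = h (card A)" if "A \<subseteq> {1..m}" "A \<noteq> {}" for A
      unfolding h_def using joint_entropy_isentropic_eq_prefix[OF assms(3) that] .
    show "(real (card {1..m}) - real a) * h 1 + (real a - 1) * h (card {1..m})
        \<le> (real (card {1..m}) - 1) * h a" if "1 \<le> a" "a \<le> card {1..m}" for a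
      using concave_seq_above_chord[of m h a] isentropic_prefix_entropy_concave[OF assms(3,2)] that
      by (simp add: h_def)
  qed
qed

end
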